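(* Let $d\ge1$, $z\ge 0$, let $0<\varphi_1\le\cdots\le\varphi_d$ and let $\tilde v_1,\ldots,\tilde v_d\in\mathbb C$ be nonzero. Let $\varphi_{\max}=\varphi_d$ and define, for $\lambda>0$ with $\lambda\notin\{\varphi_1,\dots,\varphi_d\}$, $$f(\lambda)=\lambda^2\sum_{m=1}^d\frac{\varphi_m|\tilde v_m|^2}{(\lambda-\varphi_m)^2}-\lambda+z.$$ Then $f$ has (1) no roots smaller than or equal to $z$; (2) zero, one, or two roots in $(z,\varphi_k)$, where $\varphi_k$ is the smallest eigenvalue $\varphi_m$ larger than $z$ (if such an eigenvalue exists); (3) zero, one, or two roots in $(\varphi_{L-1},\varphi_L)$ for each $L=k+1,\ldots,d$; (4) a unique root in the interval $(\max(\varphi_{\max},z),+\infty)$.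
   Context: This lemma is stated under the standing assumption that all indices are in the support $\mathcal S=\{m:\varphi_m|\tilde v_m|^2\neq0\}$, i.e. $\mathcal S=\{1,\dots,d\}$; here $\varphi_1,\ldots,\varphi_d$ are the eigenvalues of a Hermitian positive semi-definite matrix $\mathbf U$ and $\tilde v_m$ the coordinates of a vector $\mathbf v$ in the corresponding eigenbasis (this origin is not needed for the statement). *)

theory Defs
  imports Complex_Main
begin

definition secf :: "nat \<Rightarrow> (nat \<Rightarrow> real) \<Rightarrow> (nat \<Rightarrow> complex) \<Rightarrow> real \<Rightarrow> real \<Rightarrow> real" where
  "secf d \<phi> v z l =
     l\<^sup>2 * (\<Sum>m = 1..d. \<phi> m * (cmod (v m))\<^sup>2 / (l - \<phi> m)\<^sup>2) - l + z"

definition secf_root :: "nat \<Rightarrow> (nat \<Rightarrow> real) \<Rightarrow> (nat \<Rightarrow> complex) \<Rightarrow> real \<Rightarrow> real \<Rightarrow> bool" where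
  "secf_root d \<phi> v z l \<longleftrightarrow>
     l > 0 \<and> l \<notin> \<phi> ` {1..d} \<and> secf d \<phi> v z l = 0"

end

theory Submission
  imports Defs
begin

(* With the weights w_m = phi_m |v_m|^2 > 0, f(l) = (SUM m. w_m l^2 / (l - phi_m)^2) - l + z.
   For 0 < l <= z the sum is positive and z - l >= 0, so f has no root there.  Away from the
   poles, f'' = SUM m. 2 w_m phi_m (2 l + phi_m) / (l - phi_m)^4 > 0 on l > 0, so on every
   pole-free interval f is strictly convex and, by Rolle's theorem, has at most two roots.
   Beyond phi_max every term of f' = (SUM m. -2 w_m phi_m l / (l - phi_m)^3) - 1 is negative,
   so f decreases strictly from +infinity at the pole phi_max to -infinity and has exactly
   one root there. *)

lemma finite_card_le_2_if_no_increasing_triple: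
  fixes S :: "'a::linorder set"
  assumes no_triple: "\<And>x y w. x \<in> S \<Longrightarrow> y \<in> S \<Longrightarrow> w \<in> S \<Longrightarrow> x < y \<Longrightarrow> y < w \<Longrightarrow> False"
  shows "finite S \<and> card S \<le> 2"
proof -
  have "\<exists>x y. S \<subseteq> {x, y}"
  proof (rule ccontr)
    assume none: "\<nexists>x y. S \<subseteq> {x, y}"
    then obtain a b where "a \<in> S" "b \<in> S" "a \<noteq> b" by blast
    moreover from none obtain c where "c \<in> S" "c \<noteq> a" "c \<noteq> b" by blast
    ultimately show False
      using no_triple by (metis linorder_neq_iff)
  qed
  then obtain x y where "S \<subseteq> {x, y}" by blast
  moreover have "card {x, y} \<le> 2"
    by (simp add: card_insert_if)
  ultimately show ?thesis
    by (meson card_mono finite.emptyI finite.insertI finite_subset order_trans)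
qed

lemma finite_card_zeros_le_2_if_deriv2_pos:
  fixes f f' f'' :: "real \<Rightarrow> real"
  assumes f: "\<And>x. a < x \<Longrightarrow> x < b \<Longrightarrow> (f has_real_derivative f' x) (at x)"
    and f': "\<And>x. a < x \<Longrightarrow> x < b \<Longrightarrow> (f' has_real_derivative f'' x) (at x)"
    and f''_pos: "\<And>x. a < x \<Longrightarrow> x < b \<Longrightarrow> f'' x > 0"
  shows "finite {x. a < x \<and> x < b \<and> f x = 0} \<and> card {x. a < x \<and> x < b \<and> f x = 0} \<le> 2"
proof (rule finite_card_le_2_if_no_increasing_triple)
  have critical: "\<exists>c. s < c \<and> c < t \<and> f' c = 0"
    if st: "a < s" "s < t" "t < b" and zeros: "f s = 0" "f t = 0" for s t
  proof -
    have "continuous_on {s..t} f"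
      using f st by (intro DERIV_atLeastAtMost_imp_continuous_on) (meson le_less_trans less_le_trans)
    moreover have "f differentiable (at x)" if "s < x" "x < t" for x
      using f st that unfolding real_differentiable_def by (meson less_trans)
    ultimately obtain c where c: "s < c" "c < t" "DERIV f c :> 0"
      using Rolle[OF \<open>s < t\<close>, of f] zeros by auto
    then have "f' c = 0"
      using DERIV_unique f[of c] st by auto
    with c show ?thesis by blast
  qed
  fix x y w
  assume "x \<in> {x. a < x \<and> x < b \<and> f x = 0}" "y \<in> {x. a < x \<and> x < b \<and> f x = 0}"
    "w \<in> {x. a < x \<and> x < b \<and> f x = 0}" and "x < y" "y < w"
  then have zeros: "a < x" "w < b" "f x = 0" "f y = 0" "f w = 0" and "y < b" "a < y"
    by auto
  obtain c\<^sub>1 where c\<^sub>1: "x < c\<^sub>1" "c\<^sub>1 < y" "f' c\<^sub>1 = 0"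
    using critical[of x y] zeros \<open>x < y\<close> \<open>y < b\<close> by blast
  obtain c\<^sub>2 where c\<^sub>2: "y < c\<^sub>2" "c\<^sub>2 < w" "f' c\<^sub>2 = 0"
    using critical[of y w] zeros \<open>y < w\<close> \<open>a < y\<close> by blast
  have "f' c\<^sub>1 < f' c\<^sub>2"
  proof (rule DERIV_pos_imp_increasing[where f = f'])
    show "c\<^sub>1 < c\<^sub>2" using c\<^sub>1 c\<^sub>2 by linarith
    fix t assume "c\<^sub>1 \<le> t" "t \<le> c\<^sub>2"
    then have "a < t" "t < b" using c\<^sub>1 c\<^sub>2 zeros by linarith+
    then show "\<exists>y. DERIV f' t :> y \<and> y > 0" using f' f''_pos by blast
  qed
  with c\<^sub>1 c\<^sub>2 show False by simp
qed

lemma ex1_zero_if_deriv_neg: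
  fixes f f' :: "real \<Rightarrow> real"
  assumes f: "\<And>x. a < x \<Longrightarrow> (f has_real_derivative f' x) (at x)"
    and f'_neg: "\<And>x. a < x \<Longrightarrow> f' x < 0"
    and pos: "a < x\<^sub>0" "f x\<^sub>0 > 0" and neg: "a < x\<^sub>1" "f x\<^sub>1 < 0"
  shows "\<exists>!x. a < x \<and> f x = 0"
proof -
  have decreasing: "f t < f s" if "a < s" "s < t" for s t
  proof (rule DERIV_neg_imp_decreasing[OF \<open>s < t\<close>])
    fix x assume "s \<le> x"
    then have "a < x" using \<open>a < s\<close> by linarith
    then show "\<exists>y. DERIV f x :> y \<and> y < 0" using f f'_neg by blast
  qed
  have "x\<^sub>0 < x\<^sub>1"
    using decreasing[of x\<^sub>1 x\<^sub>0] pos neg by (cases x\<^sub>0 x\<^sub>1 rule: linorder_cases) auto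
  moreover have "continuous_on {x\<^sub>0..x\<^sub>1} f"
    using f pos by (intro DERIV_atLeastAtMost_imp_continuous_on) (meson less_le_trans)
  ultimately obtain r where "x\<^sub>0 \<le> r" "f r = 0"
    using IVT2'[of f x\<^sub>1 0 x\<^sub>0] pos neg by auto
  show ?thesis
  proof (rule ex1I[of _ r])
    show "a < r \<and> f r = 0" using \<open>x\<^sub>0 \<le> r\<close> \<open>f r = 0\<close> pos by auto
    fix y assume "a < y \<and> f y = 0"
    then show "y = r"
      using decreasing[of y r] decreasing[of r y] \<open>a < r \<and> f r = 0\<close>
      by (cases y r rule: linorder_cases) auto
  qed
qed

lemma has_real_derivative_sq_ratio:
  fixes c l :: real
  assumes "l \<noteq> c"
  shows "((\<lambda>l. l\<^sup>2 / (l - c)\<^sup>2) has_real_derivative -2 * c * l / (l - c) ^ 3) (at l)"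
proof -
  obtain t where l: "l = t + c" and "t \<noteq> 0"
    using assms by (metis diff_add_cancel right_minus_eq)
  then show ?thesis
    by (auto intro!: derivative_eq_intros) (simp add: field_simps eval_nat_numeral)
qed

lemma has_real_derivative_sq_ratio_deriv:
  fixes c l :: real
  assumes "l \<noteq> c"
  shows "((\<lambda>l. -2 * c * l / (l - c) ^ 3) has_real_derivative 2 * c * (2 * l + c) / (l - c) ^ 4) (at l)"
proof -
  obtain t where l: "l = t + c" and "t \<noteq> 0"
    using assms by (metis diff_add_cancel right_minus_eq)
  then show ?thesis
    by (auto intro!: derivative_eq_intros) (simp add: field_simps eval_nat_numeral)
qed

lemma secf_eq_sum:
  "secf d \<phi> v z = (\<lambda>l. (\<Sum>m = 1..d. \<phi> m * (cmod (v m))\<^sup>2 * (l\<^sup>2 / (l - \<phi> m)\<^sup>2)) - l + z)"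
  by (rule ext) (simp add: secf_def sum_distrib_left algebra_simps)

definition secf_deriv :: "nat \<Rightarrow> (nat \<Rightarrow> real) \<Rightarrow> (nat \<Rightarrow> complex) \<Rightarrow> real \<Rightarrow> real" where
  "secf_deriv d \<phi> v l =
     (\<Sum>m = 1..d. \<phi> m * (cmod (v m))\<^sup>2 * (-2 * \<phi> m * l / (l - \<phi> m) ^ 3)) - 1"

definition secf_deriv2 :: "nat \<Rightarrow> (nat \<Rightarrow> real) \<Rightarrow> (nat \<Rightarrow> complex) \<Rightarrow> real \<Rightarrow> real" where
  "secf_deriv2 d \<phi> v l =
     (\<Sum>m = 1..d. \<phi> m * (cmod (v m))\<^sup>2 * (2 * \<phi> m * (2 * l + \<phi> m) / (l - \<phi> m) ^ 4))"

lemma has_real_derivative_secf: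
  assumes "l \<notin> \<phi> ` {1..d}"
  shows "(secf d \<phi> v z has_real_derivative secf_deriv d \<phi> v l) (at l)"
proof -
  have "((\<lambda>l. (\<Sum>m = 1..d. \<phi> m * (cmod (v m))\<^sup>2 * (l\<^sup>2 / (l - \<phi> m)\<^sup>2)) - l + z)
      has_real_derivative
      (\<Sum>m = 1..d. \<phi> m * (cmod (v m))\<^sup>2 * (-2 * \<phi> m * l / (l - \<phi> m) ^ 3)) - 1 + 0) (at l)"
    by (intro DERIV_add DERIV_diff DERIV_sum DERIV_cmult DERIV_ident DERIV_const
        has_real_derivative_sq_ratio) (use assms in auto)
  then show ?thesis by (simp add: secf_eq_sum secf_deriv_def)
qed

lemma has_real_derivative_secf_deriv:
  assumes "l \<notin> \<phi> ` {1..d}"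
  shows "(secf_deriv d \<phi> v has_real_derivative secf_deriv2 d \<phi> v l) (at l)"
proof -
  have "((\<lambda>l. (\<Sum>m = 1..d. \<phi> m * (cmod (v m))\<^sup>2 * (-2 * \<phi> m * l / (l - \<phi> m) ^ 3)) - 1)
      has_real_derivative
      (\<Sum>m = 1..d. \<phi> m * (cmod (v m))\<^sup>2 * (2 * \<phi> m * (2 * l + \<phi> m) / (l - \<phi> m) ^ 4)) - 0)
      (at l)"
    by (intro DERIV_diff DERIV_sum DERIV_cmult DERIV_const
        has_real_derivative_sq_ratio_deriv) (use assms in auto)
  then show ?thesis by (simp add: secf_deriv_def[abs_def] secf_deriv2_def)
qed

lemma secf_deriv2_pos:
  assumes "d \<ge> 1" "l > 0" "l \<notin> \<phi> ` {1..d}"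
    and \<phi>_pos: "\<And>m. m \<in> {1..d} \<Longrightarrow> \<phi> m > 0" and v: "\<And>m. m \<in> {1..d} \<Longrightarrow> v m \<noteq> 0"
  shows "secf_deriv2 d \<phi> v l > 0"
  unfolding secf_deriv2_def
proof (rule sum_pos)
  show "finite {1..d}" "{1..d} \<noteq> {}" using assms by auto
  fix m assume m: "m \<in> {1..d}"
  then have "(l - \<phi> m) ^ 4 > 0" using assms(3) by (force simp: zero_less_power_eq)
  then show "0 < \<phi> m * (cmod (v m))\<^sup>2 * (2 * \<phi> m * (2 * l + \<phi> m) / (l - \<phi> m) ^ 4)"
    using \<phi>_pos[OF m] v[OF m] \<open>l > 0\<close> by simp
qed

lemma secf_deriv_neg:
  assumes "\<And>m. m \<in> {1..d} \<Longrightarrow> 0 \<le> \<phi> m \<and> \<phi> m < l"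
  shows "secf_deriv d \<phi> v l < 0"
proof -
  have "(\<Sum>m = 1..d. \<phi> m * (cmod (v m))\<^sup>2 * (-2 * \<phi> m * l / (l - \<phi> m) ^ 3)) \<le> 0"
  proof (rule sum_nonpos)
    fix m assume "m \<in> {1..d}"
    then have "0 \<le> \<phi> m" "\<phi> m < l" using assms by auto
    then show "\<phi> m * (cmod (v m))\<^sup>2 * (-2 * \<phi> m * l / (l - \<phi> m) ^ 3) \<le> 0"
      by (simp add: mult_nonneg_nonpos divide_nonpos_pos)
  qed
  then show ?thesis unfolding secf_deriv_def by simp
qed

lemma secf_root_gt_z:
  assumes "d \<ge> 1" and \<phi>_pos: "\<And>m. m \<in> {1..d} \<Longrightarrow> \<phi> m > 0"
    and v: "\<And>m. m \<in> {1..d} \<Longrightarrow> v m \<noteq> 0" and root: "secf_root d \<phi> v z l"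
  shows "z < l"
proof -
  have "l > 0" and pole_free: "l \<notin> \<phi> ` {1..d}" and "secf d \<phi> v z l = 0"
    using root by (auto simp: secf_root_def)
  have "(\<Sum>m = 1..d. \<phi> m * (cmod (v m))\<^sup>2 / (l - \<phi> m)\<^sup>2) > 0"
  proof (rule sum_pos)
    show "finite {1..d}" "{1..d} \<noteq> {}" using assms by auto
    fix m assume m: "m \<in> {1..d}"
    then have "(l - \<phi> m)\<^sup>2 > 0" using pole_free by force
    then show "0 < \<phi> m * (cmod (v m))\<^sup>2 / (l - \<phi> m)\<^sup>2" using \<phi>_pos[OF m] v[OF m] by simp
  qed
  with \<open>l > 0\<close> have "l\<^sup>2 * (\<Sum>m = 1..d. \<phi> m * (cmod (v m))\<^sup>2 / (l - \<phi> m)\<^sup>2) > 0" by simp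
  with \<open>secf d \<phi> v z l = 0\<close> show ?thesis unfolding secf_def by linarith
qed

lemma finite_card_secf_roots_le_2:
  assumes "d \<ge> 1" "0 \<le> p" and \<phi>_pos: "\<And>m. m \<in> {1..d} \<Longrightarrow> \<phi> m > 0"
    and v: "\<And>m. m \<in> {1..d} \<Longrightarrow> v m \<noteq> 0"
    and no_pole: "\<And>m. m \<in> {1..d} \<Longrightarrow> \<phi> m \<notin> {p<..<q}"
  shows "finite {l. secf_root d \<phi> v z l \<and> p < l \<and> l < q}
    \<and> card {l. secf_root d \<phi> v z l \<and> p < l \<and> l < q} \<le> 2"
proof -
  let ?Z = "{l. p < l \<and> l < q \<and> secf d \<phi> v z l = 0}"
  have pole_free: "l \<notin> \<phi> ` {1..d}" if "p < l" "l < q" for l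
    using no_pole that by fastforce
  have "finite ?Z \<and> card ?Z \<le> 2"
  proof (rule finite_card_zeros_le_2_if_deriv2_pos)
    fix l assume "p < l" "l < q"
    then have "l \<notin> \<phi> ` {1..d}" "l > 0" using pole_free \<open>0 \<le> p\<close> by auto
    then show "(secf d \<phi> v z has_real_derivative secf_deriv d \<phi> v l) (at l)"
      "(secf_deriv d \<phi> v has_real_derivative secf_deriv2 d \<phi> v l) (at l)"
      "secf_deriv2 d \<phi> v l > 0"
      using secf_deriv2_pos[OF \<open>d \<ge> 1\<close> _ _ \<phi>_pos v]
      by (simp_all add: has_real_derivative_secf has_real_derivative_secf_deriv)
  qed
  moreover have "{l. secf_root d \<phi> v z l \<and> p < l \<and> l < q} \<subseteq> ?Z"
    by (auto simp: secf_root_def)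
  ultimately show ?thesis
    by (meson card_mono finite_subset order_trans)
qed

lemma secf_pos_right_of_pole:
  assumes "m\<^sub>0 \<in> {1..d}" "v m\<^sub>0 \<noteq> 0" "\<phi> m\<^sub>0 = M" "M > 0"
    and \<phi>_nonneg: "\<And>m. m \<in> {1..d} \<Longrightarrow> 0 \<le> \<phi> m"
  shows "\<exists>l > M. secf d \<phi> v z l > 0"
proof -
  define w where "w = \<phi> m\<^sub>0 * (cmod (v m\<^sub>0))\<^sup>2"
  define B where "B = M + 2 + \<bar>z\<bar>"
  define e where "e = min 1 (w * M\<^sup>2 / B)"
  have "w > 0" "B > 0" using assms unfolding w_def B_def by auto
  have "e \<le> w * M\<^sup>2 / B" unfolding e_def by simp
  with \<open>B > 0\<close> have "e * B \<le> w * M\<^sup>2" by (simp add: pos_le_divide_eq)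
  moreover have "0 < e" "e \<le> 1"
    unfolding e_def using \<open>w > 0\<close> \<open>B > 0\<close> \<open>M > 0\<close> by auto
  ultimately have e: "0 < e" "e \<le> 1" "e * B \<le> w * M\<^sup>2" by auto
  have "B \<le> w * M\<^sup>2 / e"
    using e by (simp add: pos_le_divide_eq mult.commute)
  also have "\<dots> \<le> w * M\<^sup>2 / e\<^sup>2"
    using e \<open>w > 0\<close> by (intro divide_left_mono) (auto simp: power2_eq_square mult_le_cancel_left1)
  also have "\<dots> \<le> w * ((M + e)\<^sup>2 / (M + e - \<phi> m\<^sub>0)\<^sup>2)"
    using e \<open>w > 0\<close> \<open>M > 0\<close> assms(3) by (auto intro!: divide_right_mono power_mono)
  also have "\<dots> \<le> (\<Sum>m = 1..d. \<phi> m * (cmod (v m))\<^sup>2 * ((M + e)\<^sup>2 / (M + e - \<phi> m)\<^sup>2))"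
    unfolding w_def using assms(1) \<phi>_nonneg by (intro member_le_sum) auto
  finally have "B \<le> secf d \<phi> v z (M + e) + (M + e) - z"
    by (simp add: secf_eq_sum)
  then have "secf d \<phi> v z (M + e) > 0"
    using e unfolding B_def by linarith
  with e show ?thesis by (intro exI[of _ "M + e"]) auto
qed

lemma secf_neg_far:
  assumes "0 \<le> M" and bounded: "\<And>m. m \<in> {1..d} \<Longrightarrow> 0 \<le> \<phi> m \<and> \<phi> m \<le> M"
  shows "\<exists>l > M. secf d \<phi> v z l < 0"
proof -
  define A where "A = (\<Sum>m = 1..d. \<phi> m * (cmod (v m))\<^sup>2)"
  define l where "l = 2 * M + 4 * A + \<bar>z\<bar> + 1"
  have "A \<ge> 0" unfolding A_def using bounded by (auto intro: sum_nonneg)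
  have "(\<Sum>m = 1..d. \<phi> m * (cmod (v m))\<^sup>2 * (l\<^sup>2 / (l - \<phi> m)\<^sup>2)) \<le> (\<Sum>m = 1..d. \<phi> m * (cmod (v m))\<^sup>2 * 4)"
  proof (rule sum_mono)
    fix m assume "m \<in> {1..d}"
    then have "0 \<le> \<phi> m" "\<phi> m \<le> M" using bounded by auto
    then have "0 < l - \<phi> m" "l \<le> 2 * (l - \<phi> m)"
      unfolding l_def using \<open>A \<ge> 0\<close> by (simp_all add: algebra_simps)
    then have "l\<^sup>2 \<le> 2\<^sup>2 * (l - \<phi> m)\<^sup>2"
      unfolding power_mult_distrib[symmetric] using \<open>0 \<le> \<phi> m\<close> by (intro power_mono) auto
    then have "l\<^sup>2 / (l - \<phi> m)\<^sup>2 \<le> 4"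
      using \<open>0 < l - \<phi> m\<close> by (simp add: pos_divide_le_eq)
    then show "\<phi> m * (cmod (v m))\<^sup>2 * (l\<^sup>2 / (l - \<phi> m)\<^sup>2) \<le> \<phi> m * (cmod (v m))\<^sup>2 * 4"
      using \<open>0 \<le> \<phi> m\<close> by (intro mult_left_mono) auto
  qed
  moreover have "(\<Sum>m = 1..d. \<phi> m * (cmod (v m))\<^sup>2 * 4) = A * 4"
    by (simp add: A_def sum_distrib_right)
  ultimately have "secf d \<phi> v z l \<le> 4 * A - l + z"
    by (simp add: secf_eq_sum)
  then have "secf d \<phi> v z l < 0"
    unfolding l_def using \<open>0 \<le> M\<close> by linarith
  moreover have "l > M"
    unfolding l_def using \<open>0 \<le> M\<close> \<open>A \<ge> 0\<close> by linarith
  ultimately show ?thesis by blast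
qed

lemma ex1_secf_root_gt_pole:
  assumes "m\<^sub>0 \<in> {1..d}" "v m\<^sub>0 \<noteq> 0" "\<phi> m\<^sub>0 = M" "M > 0"
    and bounded: "\<And>m. m \<in> {1..d} \<Longrightarrow> 0 \<le> \<phi> m \<and> \<phi> m \<le> M"
  shows "\<exists>!l. M < l \<and> secf_root d \<phi> v z l"
proof -
  obtain x\<^sub>0 x\<^sub>1 where "M < x\<^sub>0" "secf d \<phi> v z x\<^sub>0 > 0" "M < x\<^sub>1" "secf d \<phi> v z x\<^sub>1 < 0"
    using secf_pos_right_of_pole[of m\<^sub>0 d v \<phi> M z] secf_neg_far[of M d \<phi> v z] assms
    by (meson less_imp_le)
  moreover have "(secf d \<phi> v z has_real_derivative secf_deriv d \<phi> v l) (at l)"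
    and "secf_deriv d \<phi> v l < 0" if "M < l" for l
  proof -
    have "l \<notin> \<phi> ` {1..d}" using bounded that by fastforce
    then show "(secf d \<phi> v z has_real_derivative secf_deriv d \<phi> v l) (at l)"
      by (rule has_real_derivative_secf)
    show "secf_deriv d \<phi> v l < 0"
      by (rule secf_deriv_neg) (use bounded that in fastforce)
  qed
  ultimately have "\<exists>!l. M < l \<and> secf d \<phi> v z l = 0"
    by (intro ex1_zero_if_deriv_neg)
  moreover have "secf_root d \<phi> v z l \<longleftrightarrow> secf d \<phi> v z l = 0" if "M < l" for l
    using that \<open>M > 0\<close> bounded by (force simp: secf_root_def)
  ultimately show ?thesis by metis
qed

lemma mono_not_between_consecutive:
  fixes \<phi> :: "nat \<Rightarrow> 'a::linorder"
  assumes mono: "\<And>i j. 1 \<le> i \<Longrightarrow> i \<le> j \<Longrightarrow> j \<le> d \<Longrightarrow> \<phi> i \<le> \<phi> j"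
    and "2 \<le> L" "L \<le> d" "m \<in> {1..d}"
  shows "\<phi> m \<notin> {\<phi> (L - 1)<..<\<phi> L}"
proof (cases "m \<le> L - 1")
  case True
  then have "\<phi> m \<le> \<phi> (L - 1)" using mono assms by simp
  then show ?thesis by (auto dest: leD)
next
  case False
  then have "\<phi> L \<le> \<phi> m" using mono[of L m] assms by simp
  then show ?thesis by (auto dest: leD)
qed

theorem lemma3:
  fixes d :: nat and \<phi> :: "nat \<Rightarrow> real" and v :: "nat \<Rightarrow> complex" and z :: real
  assumes d: "d \<ge> 1"
    and z: "z \<ge> 0"
    and pos: "\<phi> 1 > 0"
    and mono: "\<And>i j. 1 \<le> i \<Longrightarrow> i \<le> j \<Longrightarrow> j \<le> d \<Longrightarrow> \<phi> i \<le> \<phi> j"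
    and v: "\<And>m. m \<in> {1..d} \<Longrightarrow> v m \<noteq> 0"
  shows
    "(\<forall>l. secf_root d \<phi> v z l \<longrightarrow> l > z)
   \<and> (\<forall>k. k \<in> {1..d} \<and> \<phi> k > z \<and> (\<forall>m\<in>{1..d}. \<phi> m > z \<longrightarrow> k \<le> m) \<longrightarrow>
        (finite {l. secf_root d \<phi> v z l \<and> z < l \<and> l < \<phi> k}
         \<and> card {l. secf_root d \<phi> v z l \<and> z < l \<and> l < \<phi> k} \<le> 2)
      \<and> (\<forall>L\<in>{k+1..d}.
           finite {l. secf_root d \<phi> v z l \<and> \<phi> (L - 1) < l \<and> l < \<phi> L}
         \<and> card {l. secf_root d \<phi> v z l \<and> \<phi> (L - 1) < l \<and> l < \<phi> L} \<le> 2))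
   \<and> (\<exists>!l. l > max (\<phi> d) z \<and> secf_root d \<phi> v z l)"
proof -
  have \<phi>_pos: "\<phi> m > 0" if "m \<in> {1..d}" for m
    using pos mono[of 1 m] that by auto
  have roots_gt_z: "\<forall>l. secf_root d \<phi> v z l \<longrightarrow> l > z"
    using secf_root_gt_z[of d \<phi> v, OF d \<phi>_pos v] by blast
  have first_gap: "finite {l. secf_root d \<phi> v z l \<and> z < l \<and> l < \<phi> k}
      \<and> card {l. secf_root d \<phi> v z l \<and> z < l \<and> l < \<phi> k} \<le> 2"
    if k: "k \<in> {1..d} \<and> \<phi> k > z \<and> (\<forall>m\<in>{1..d}. \<phi> m > z \<longrightarrow> k \<le> m)" for k
  proof (intro finite_card_secf_roots_le_2)
    show "\<phi> m \<notin> {z<..<\<phi> k}" if "m \<in> {1..d}" for m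
      using k mono[of k m] that by force
  qed (use d z \<phi>_pos v in auto)
  have later_gap: "finite {l. secf_root d \<phi> v z l \<and> \<phi> (L - 1) < l \<and> l < \<phi> L}
      \<and> card {l. secf_root d \<phi> v z l \<and> \<phi> (L - 1) < l \<and> l < \<phi> L} \<le> 2"
    if "2 \<le> L" "L \<le> d" for L
  proof (intro finite_card_secf_roots_le_2)
    have "L - 1 \<in> {1..d}" using that by auto
    then show "0 \<le> \<phi> (L - 1)" using \<phi>_pos less_imp_le by blast
    show "\<phi> m \<notin> {\<phi> (L - 1)<..<\<phi> L}" if "m \<in> {1..d}" for m
      using mono_not_between_consecutive[of d \<phi> L m] mono that \<open>2 \<le> L\<close> \<open>L \<le> d\<close> by blast
  qed (use d \<phi>_pos v in auto)
  have "\<exists>!l. \<phi> d < l \<and> secf_root d \<phi> v z l"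
    using d v \<phi>_pos mono by (intro ex1_secf_root_gt_pole[of d]) (auto simp: less_imp_le)
  moreover have "max (\<phi> d) z < l \<and> secf_root d \<phi> v z l \<longleftrightarrow> \<phi> d < l \<and> secf_root d \<phi> v z l" for l
    using roots_gt_z by auto
  ultimately have "\<exists>!l. l > max (\<phi> d) z \<and> secf_root d \<phi> v z l"
    by simp
  with roots_gt_z first_gap later_gap show ?thesis
    by auto
qed

end
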